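(* Let $\Delta$ be the maximum degree of an anonymous graph (assumed even), $D$ the length of a shortest path from the agent's start node $s$ to the treasure $t$, and $\delta=\cos^2\!\left(\frac{\pi}{2\Delta}\right)$. There exists a randomized strategy, using at most one quantum pebble at each node and a total of $D$ quantum pebbles, with which an oblivious agent finds the treasure in $D$ steps with high probability; the agent needs to make $O\big((\log D+\log\Delta)/\log(1/\delta)\big)$ measurements at each node. In this strategy the oracle places, at each node of a shortest $s$–$t$ path other than $t$, a quantum pebble emitting the state $f(p)$ where $p\in\{1,\dots,\Delta\}$ is the port number of the next path edge, $f(2i+1)=|i_+\rangle$, $f(2i+2)=|i_-\rangle$ for $i\in\{0,\dots,\Delta/2-1\}$, with $|i_\pm\rangle=\frac1{\sqrt2}(|0\rangle\pm e^{\mathrm{i}\, i\pi/\Delta}|1\rangle)$; the agent measures $n$ emitted qubits in each basis $M(j)=\{|j_+\rangle,|j_-\rangle\}$, $j=0,\dots,\Delta/2-1$, and follows the port $f^{-1}$ of the outcome observed most often. Here $\delta$ serves as an upper bound on the probability of observing a given outcome $j_\pm$ when a state $|k_\pm\rangle$ with $k\ne j$ is measured in $M(j)$.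
   Context: Anonymous graph: connected simple undirected graph with unlabelled, indistinguishable nodes; the edges at each node $v$ carry distinct local port numbers (here numbered $1,\dots,\deg(v)$). An agent starts at $s$ and must reach the stationary treasure $t$. In each round it observes its current node (degree and the quantum pebble there, if any), computes, and traverses at most one edge; it is oblivious, i.e. it has no memory of previous rounds. A quantum pebble is a source placed at a node by an oracle (which knows the instance) that repeatedly emits qubits all in the same quantum state, unknown to the agent; the agent may perform projective single-qubit measurements in any chosen orthonormal basis on as many copies as it wishes. "High probability" means the probability of reaching the treasure in $D$ steps tends to $1$. *)

theory Defs
  imports "HOL-Probability.Probability"
begin

text \<open>A (pure) qubit state is a vector (a,b) in C^2, standing for a|0> + b|1>.\<close>
type_synonym qubit = "complex \<times> complex"

definition inner_q :: "qubit \<Rightarrow> qubit \<Rightarrow> complex" where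
  "inner_q a b = cnj (fst a) * fst b + cnj (snd a) * snd b"

definition born :: "qubit \<Rightarrow> qubit \<Rightarrow> real" where
  "born phi psi = (cmod (inner_q phi psi))\<^sup>2"

definition ket_plus :: "nat \<Rightarrow> nat \<Rightarrow> qubit" where
  "ket_plus Delta i = (complex_of_real (1 / sqrt 2),
      exp (\<i> * complex_of_real (real i * pi / real Delta)) / complex_of_real (sqrt 2))"

definition ket_minus :: "nat \<Rightarrow> nat \<Rightarrow> qubit" where
  "ket_minus Delta i = (complex_of_real (1 / sqrt 2),
      - exp (\<i> * complex_of_real (real i * pi / real Delta)) / complex_of_real (sqrt 2))"

definition f_state :: "nat \<Rightarrow> nat \<Rightarrow> qubit" where
  "f_state Delta p = (if odd p then ket_plus Delta ((p - 1) div 2) else ket_minus Delta ((p - 2) div 2))"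

definition delta :: "nat \<Rightarrow> real" where
  "delta Delta = (cos (pi / (2 * real Delta)))\<^sup>2"

text \<open>For each basis j < Delta/2, the agent measures n qubits in M(j); c j is the number of
  outcomes j_+ (so n - c j outcomes j_-). Outcome j_+ corresponds to port 2j+1, j_- to 2j+2.\<close>
definition outcome_count :: "nat \<Rightarrow> (nat \<Rightarrow> nat) \<Rightarrow> nat \<Rightarrow> nat" where
  "outcome_count n c p = (if odd p then c ((p - 1) div 2) else n - c ((p - 2) div 2))"

text \<open>Port f^{-1} of the outcome observed most often (ties broken by the smallest port).\<close>
definition decide :: "nat \<Rightarrow> nat \<Rightarrow> (nat \<Rightarrow> nat) \<Rightarrow> nat" where
  "decide Delta n c = (LEAST p. p \<in> {1..Delta} \<and>
      (\<forall>q\<in>{1..Delta}. outcome_count n c q \<le> outcome_count n c p))"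

definition counts_pmf :: "nat \<Rightarrow> nat \<Rightarrow> qubit \<Rightarrow> (nat \<Rightarrow> nat) pmf" where
  "counts_pmf Delta n psi =
     Pi_pmf {..< Delta div 2} 0 (\<lambda>j. binomial_pmf n (born (ket_plus Delta j) psi))"

definition agent_choice :: "nat \<Rightarrow> nat \<Rightarrow> qubit \<Rightarrow> nat pmf" where
  "agent_choice Delta n psi = map_pmf (decide Delta n) (counts_pmf Delta n psi)"

definition simple_graph :: "'v set \<Rightarrow> ('v \<Rightarrow> 'v \<Rightarrow> bool) \<Rightarrow> bool" where
  "simple_graph V E \<longleftrightarrow> finite V \<and> (\<forall>u v. E u v \<longrightarrow> u \<in> V \<and> v \<in> V)
     \<and> (\<forall>u v. E u v \<longrightarrow> E v u) \<and> (\<forall>v. \<not> E v v)"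

definition is_walk :: "('v \<Rightarrow> 'v \<Rightarrow> bool) \<Rightarrow> 'v list \<Rightarrow> bool" where
  "is_walk E P \<longleftrightarrow> P \<noteq> [] \<and> (\<forall>i. Suc i < length P \<longrightarrow> E (P ! i) (P ! Suc i))"

definition connected_graph :: "'v set \<Rightarrow> ('v \<Rightarrow> 'v \<Rightarrow> bool) \<Rightarrow> bool" where
  "connected_graph V E \<longleftrightarrow> (\<forall>u\<in>V. \<forall>v\<in>V. \<exists>P. is_walk E P \<and> hd P = u \<and> last P = v)"

definition deg :: "('v \<Rightarrow> 'v \<Rightarrow> bool) \<Rightarrow> 'v \<Rightarrow> nat" where
  "deg E v = card {u. E v u}"

definition max_degree :: "'v set \<Rightarrow> ('v \<Rightarrow> 'v \<Rightarrow> bool) \<Rightarrow> nat" where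
  "max_degree V E = Max (deg E ` V)"

text \<open>port v p is the neighbour of v reached via local port p, 1 <= p <= deg v.\<close>
definition port_numbering :: "'v set \<Rightarrow> ('v \<Rightarrow> 'v \<Rightarrow> bool) \<Rightarrow> ('v \<Rightarrow> nat \<Rightarrow> 'v) \<Rightarrow> bool" where
  "port_numbering V E port \<longleftrightarrow> (\<forall>v\<in>V. bij_betw (port v) {1..deg E v} {u. E v u})"

definition port_of :: "('v \<Rightarrow> 'v \<Rightarrow> bool) \<Rightarrow> ('v \<Rightarrow> nat \<Rightarrow> 'v) \<Rightarrow> 'v \<Rightarrow> 'v \<Rightarrow> nat" where
  "port_of E port v u = (THE p. p \<in> {1..deg E v} \<and> port v p = u)"

definition graph_dist :: "('v \<Rightarrow> 'v \<Rightarrow> bool) \<Rightarrow> 'v \<Rightarrow> 'v \<Rightarrow> nat" where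
  "graph_dist E s t = (LEAST d. \<exists>P. is_walk E P \<and> hd P = s \<and> last P = t \<and> length P = Suc d)"

definition shortest_path :: "('v \<Rightarrow> 'v \<Rightarrow> bool) \<Rightarrow> 'v \<Rightarrow> 'v \<Rightarrow> 'v list \<Rightarrow> bool" where
  "shortest_path E s t P \<longleftrightarrow> is_walk E P \<and> hd P = s \<and> last P = t
     \<and> length P = Suc (graph_dist E s t)"

text \<open>At each node P!i (i < D) of the path, a pebble emitting f(p), p the port to P!(i+1).\<close>
definition pebbles :: "('v \<Rightarrow> 'v \<Rightarrow> bool) \<Rightarrow> ('v \<Rightarrow> nat \<Rightarrow> 'v) \<Rightarrow> nat \<Rightarrow> 'v list \<Rightarrow> 'v \<Rightarrow> qubit option" where
  "pebbles E port Delta P v =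
     (if v \<in> set (butlast P)
      then Some (f_state Delta (port_of E port v
              (P ! Suc (THE i. Suc i < length P \<and> P ! i = v))))
      else None)"

text \<open>One round: at a node with a pebble the agent measures and follows the chosen port
  (staying put if that port does not exist); at a node without pebble it stays.\<close>
definition agent_step :: "('v \<Rightarrow> 'v \<Rightarrow> bool) \<Rightarrow> ('v \<Rightarrow> nat \<Rightarrow> 'v) \<Rightarrow> nat \<Rightarrow> nat
    \<Rightarrow> ('v \<Rightarrow> qubit option) \<Rightarrow> 'v \<Rightarrow> 'v pmf" where
  "agent_step E port Delta n peb v =
     (case peb v of
        None \<Rightarrow> return_pmf v
      | Some psi \<Rightarrow> map_pmf (\<lambda>p. if 1 \<le> p \<and> p \<le> deg E v then port v p else v)
                     (agent_choice Delta n psi))"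

fun walk_pmf :: "('v \<Rightarrow> 'v pmf) \<Rightarrow> nat \<Rightarrow> 'v \<Rightarrow> 'v pmf" where
  "walk_pmf step 0 v = return_pmf v"
| "walk_pmf step (Suc k) v = bind_pmf (walk_pmf step k v) step"

end

theory Submission
  imports Defs
begin

text \<open>Measured in its own basis M(j), the state f(p) gives the outcome belonging to p with
  certainty, so that outcome is seen n times. Measured in any other basis M(j), each of the two
  outcomes has probability at most \<delta>, so the n measurements all agree with probability at
  most 2\<delta>^n. Unless this happens for one of the other \<Delta>/2 - 1 bases, the correct
  port is the unique most frequent outcome; hence the agent errs at a pebble with probability at
  most \<Delta>\<delta>^n. Taking n about 2 log(D\<Delta>) / log(1/\<delta>) makes this at most
  1/D^2, and a union bound over the D steps of the shortest path gives success
  probability at least 1 - 1/D.\<close>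

section \<open>Born probabilities of the pebble states\<close>

lemma born_phase_states:
  assumes "s = 1 \<or> s = -1"
  shows "born (complex_of_real (1 / sqrt 2), cis a / complex_of_real (sqrt 2))
              (complex_of_real (1 / sqrt 2), of_real s * cis b / complex_of_real (sqrt 2))
     = (1 + s * cos (b - a)) / 2"
proof -
  let ?phi = "(complex_of_real (1 / sqrt 2), cis a / complex_of_real (sqrt 2))"
  let ?psi = "(complex_of_real (1 / sqrt 2), of_real s * cis b / complex_of_real (sqrt 2))"
  have "inner_q ?phi ?psi = (1 + of_real s * cis (b - a)) / 2"
    unfolding inner_q_def
    by (simp add: field_simps cis_mult[symmetric] cis_cnj flip: of_real_mult)
       (simp add: cis_mult cis_divide)
  then have "born ?phi ?psi = (cmod ((1 + of_real s * cis (b - a)) / 2))\<^sup>2"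
    unfolding born_def by (rule arg_cong)
  also have "\<dots> = ((1 + s * cos (b - a))\<^sup>2 + (s * sin (b - a))\<^sup>2) / 4"
    by (simp add: norm_divide power_divide cmod_power2)
  also have "\<dots> = (1 + s * cos (b - a)) / 2"
  proof -
    have "s\<^sup>2 = 1" using assms by auto
    have "(1 + s * cos (b - a))\<^sup>2 + (s * sin (b - a))\<^sup>2
        = 1 + 2 * s * cos (b - a) + s\<^sup>2 * ((cos (b - a))\<^sup>2 + (sin (b - a))\<^sup>2)"
      by algebra
    also have "\<dots> = 2 * (1 + s * cos (b - a))" using \<open>s\<^sup>2 = 1\<close> by simp
    finally show ?thesis by simp
  qed
  finally show ?thesis .
qed

text \<open>Port p is read off the basis M(j) with j = (p - 1) div 2: from the outcome j_+ if p
  is odd, from j_- if p is even.\<close>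
definition port_basis :: "nat \<Rightarrow> nat" where
  "port_basis p = (p - 1) div 2"

definition port_sign :: "nat \<Rightarrow> real" where
  "port_sign p = (if odd p then 1 else -1)"

lemma f_state_eq:
  "f_state Delta p = (complex_of_real (1 / sqrt 2),
     of_real (port_sign p) * cis (real (port_basis p) * pi / real Delta) / complex_of_real (sqrt 2))"
proof -
  have "(p - 2) div 2 = (p - 1) div 2" if "even p" using that by presburger
  then show ?thesis
    unfolding f_state_def ket_plus_def ket_minus_def port_basis_def port_sign_def cis_conv_exp
    by auto
qed

lemma born_f_state:
  "born (ket_plus Delta j) (f_state Delta p)
     = (1 + port_sign p * cos ((real (port_basis p) - real j) * pi / real Delta)) / 2"
  unfolding f_state_eq ket_plus_def cis_conv_exp[symmetric]
  by (subst born_phase_states) (auto simp: port_sign_def diff_divide_distrib left_diff_distrib)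

lemma born_f_state_own_basis:
  "born (ket_plus Delta (port_basis p)) (f_state Delta p) = (if odd p then 1 else 0)"
  unfolding born_f_state by (simp add: port_sign_def)

lemma born_f_state_bounds: "0 \<le> born (ket_plus Delta j) (f_state Delta p)"
  "born (ket_plus Delta j) (f_state Delta p) \<le> 1"
proof -
  have "\<bar>port_sign p * cos ((real (port_basis p) - real j) * pi / real Delta)\<bar> \<le> 1"
    by (auto simp: port_sign_def abs_mult)
  then show "0 \<le> born (ket_plus Delta j) (f_state Delta p)"
    "born (ket_plus Delta j) (f_state Delta p) \<le> 1"
    unfolding born_f_state by (auto simp: abs_le_iff)
qed

lemma delta_eq: "delta Delta = (1 + cos (pi / real Delta)) / 2"
proof -
  have "cos (pi / real Delta) = cos (2 * (pi / (2 * real Delta)))" by simp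
  also have "\<dots> = 2 * (cos (pi / (2 * real Delta)))\<^sup>2 - 1" by (rule cos_double_cos)
  finally show ?thesis unfolding delta_def by simp
qed

lemma abs_cos_basis_diff_le:
  assumes "j < Delta div 2" "k < Delta div 2" "j \<noteq> k"
  shows "\<bar>cos ((real k - real j) * pi / real Delta)\<bar> \<le> cos (pi / real Delta)"
proof -
  define d where "d = \<bar>real k - real j\<bar>"
  have Delta: "real Delta \<ge> 2" using assms by linarith
  have nonneg: "0 \<le> pi / real Delta" by simp
  have "1 \<le> d" using assms(3) unfolding d_def by (cases "j < k") auto
  then have lower: "pi / real Delta \<le> d * pi / real Delta"
    using Delta by (simp add: divide_right_mono)
  have "d \<le> real Delta / 2" using assms unfolding d_def by linarith
  then have "d * pi / real Delta \<le> (real Delta / 2) * pi / real Delta"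
    using Delta by (intro divide_right_mono mult_right_mono) auto
  also have "\<dots> = pi / 2" using Delta by simp
  finally have upper: "d * pi / real Delta \<le> pi / 2" .
  have "cos ((real k - real j) * pi / real Delta) = cos (d * pi / real Delta)"
    unfolding d_def by (metis abs_divide abs_mult abs_of_nonneg cos_abs_real pi_ge_zero of_nat_0_le_iff)
  moreover have "0 \<le> cos (d * pi / real Delta)"
    using nonneg lower upper pi_gt_zero by (intro cos_ge_zero) linarith+
  moreover have "cos (d * pi / real Delta) \<le> cos (pi / real Delta)"
    using nonneg lower upper pi_gt_zero by (intro cos_monotone_0_pi_le) linarith+
  ultimately show ?thesis by simp
qed

lemma born_f_state_other_basis:
  assumes "j < Delta div 2" "port_basis p < Delta div 2" "j \<noteq> port_basis p"
  shows "born (ket_plus Delta j) (f_state Delta p) \<le> delta Delta"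
    and "1 - born (ket_plus Delta j) (f_state Delta p) \<le> delta Delta"
proof -
  have "\<bar>cos ((real (port_basis p) - real j) * pi / real Delta)\<bar> \<le> cos (pi / real Delta)"
    using assms by (intro abs_cos_basis_diff_le) auto
  moreover have "port_sign p = 1 \<or> port_sign p = -1" unfolding port_sign_def by auto
  ultimately show "born (ket_plus Delta j) (f_state Delta p) \<le> delta Delta"
    and "1 - born (ket_plus Delta j) (f_state Delta p) \<le> delta Delta"
    unfolding born_f_state delta_eq by (auto simp: abs_le_iff field_simps)
qed

section \<open>The agent's decision\<close>

lemma outcome_count_eq:
  "outcome_count n c p = (if odd p then c (port_basis p) else n - c (port_basis p))"
proof -
  have "(p - 2) div 2 = (p - 1) div 2" if "even p" using that by presburger
  then show ?thesis unfolding outcome_count_def port_basis_def by auto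
qed

lemma port_basis_less: "even Delta \<Longrightarrow> 1 \<le> p \<Longrightarrow> p \<le> Delta \<Longrightarrow> port_basis p < Delta div 2"
  unfolding port_basis_def by presburger

lemma port_basis_inj:
  "1 \<le> p \<Longrightarrow> 1 \<le> q \<Longrightarrow> port_basis p = port_basis q \<Longrightarrow> odd p = odd q \<Longrightarrow> p = q"
  unfolding port_basis_def by presburger

lemma decide_eq:
  assumes "even Delta" "p \<in> {1..Delta}" "1 \<le> n"
    and own: "outcome_count n c p = n"
    and others: "\<forall>j<Delta div 2. j \<noteq> port_basis p \<longrightarrow> 0 < c j \<and> c j < n"
  shows "decide Delta n c = p"
proof -
  have less: "outcome_count n c q < n" if q: "q \<in> {1..Delta}" "q \<noteq> p" for q
  proof (cases "port_basis q = port_basis p")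
    case True
    then have "odd q \<noteq> odd p" using port_basis_inj[of p q] q assms(2) by auto
    then show ?thesis using True own assms(3) by (auto simp: outcome_count_eq split: if_splits)
  next
    case False
    then have "0 < c (port_basis q) \<and> c (port_basis q) < n"
      using others port_basis_less[OF assms(1)] q by auto
    then show ?thesis by (auto simp: outcome_count_eq)
  qed
  show ?thesis unfolding decide_def
  proof (rule Least_equality)
    show "p \<in> {1..Delta} \<and> (\<forall>q\<in>{1..Delta}. outcome_count n c q \<le> outcome_count n c p)"
      using assms(2) own less by fastforce
  next
    fix q assume "q \<in> {1..Delta} \<and> (\<forall>r\<in>{1..Delta}. outcome_count n c r \<le> outcome_count n c q)"
    then show "p \<le> q" using less[of q] assms(2) own by fastforce
  qed
qed

text \<open>The agent can only go wrong if, in some basis other than the one of the correct port,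
  all n outcomes coincide: then that outcome ties with the correct one.\<close>
definition ambiguous_counts :: "nat \<Rightarrow> nat \<Rightarrow> nat \<Rightarrow> (nat \<Rightarrow> nat) set" where
  "ambiguous_counts Delta n k = {c. \<exists>j<Delta div 2. j \<noteq> k \<and> (c j = 0 \<or> c j = n)}"

lemma counts_pmf_component:
  assumes "j < Delta div 2"
  shows "map_pmf (\<lambda>c. c j) (counts_pmf Delta n psi) = binomial_pmf n (born (ket_plus Delta j) psi)"
  unfolding counts_pmf_def using assms by (simp add: Pi_pmf_component)

lemma binomial_pmf_prob_extremes_le:
  assumes "0 \<le> q" "q \<le> 1" "q \<le> d" "1 - q \<le> d"
  shows "measure_pmf.prob (binomial_pmf n q) {0, n} \<le> 2 * d ^ n"
proof -
  have "measure_pmf.prob (binomial_pmf n q) {0, n} = sum (pmf (binomial_pmf n q)) {0, n}"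
    by (simp add: measure_measure_pmf_finite)
  also have "\<dots> \<le> pmf (binomial_pmf n q) 0 + pmf (binomial_pmf n q) n"
    by (cases "n = 0") simp_all
  also have "\<dots> = (1 - q) ^ n + q ^ n" using assms by simp
  also have "\<dots> \<le> d ^ n + d ^ n" using assms by (intro add_mono power_mono) auto
  finally show ?thesis by simp
qed

context
  fixes Delta n p :: nat
  assumes even_Delta: "even Delta" and port: "p \<in> {1..Delta}" and n_pos: "1 \<le> n"
begin

lemma decide_counts_f_state:
  assumes c: "c \<in> set_pmf (counts_pmf Delta n (f_state Delta p))"
    and "c \<notin> ambiguous_counts Delta n (port_basis p)"
  shows "decide Delta n c = p"
proof (rule decide_eq[OF even_Delta port n_pos])
  have count_in: "c j \<in> set_pmf (binomial_pmf n (born (ket_plus Delta j) (f_state Delta p)))"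
    if "j < Delta div 2" for j
    using c that by (auto simp flip: counts_pmf_component)
  have "c j \<le> n" if "j < Delta div 2" for j
    using count_in[OF that] born_f_state_bounds[of Delta j p]
    by (subst (asm) set_pmf_binomial_eq) (auto split: if_splits)
  then show "\<forall>j<Delta div 2. j \<noteq> port_basis p \<longrightarrow> 0 < c j \<and> c j < n"
    using assms(2) unfolding ambiguous_counts_def by fastforce
  have "port_basis p < Delta div 2" using port_basis_less even_Delta port by auto
  then show "outcome_count n c p = n"
    using count_in[of "port_basis p"] by (auto simp: outcome_count_eq born_f_state_own_basis)
qed

lemma counts_pmf_prob_ambiguous_le:
  "measure_pmf.prob (counts_pmf Delta n (f_state Delta p)) (ambiguous_counts Delta n (port_basis p))
   \<le> real Delta * delta Delta ^ n"
proof -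
  define M where "M = counts_pmf Delta n (f_state Delta p)"
  define J where "J = {..<Delta div 2} - {port_basis p}"
  have "port_basis p < Delta div 2" using port_basis_less even_Delta port by auto
  have single: "measure_pmf.prob M {c. c j = 0 \<or> c j = n} \<le> 2 * delta Delta ^ n"
    if j: "j \<in> J" for j
  proof -
    have "measure_pmf.prob M {c. c j = 0 \<or> c j = n}
        = measure_pmf.prob (map_pmf (\<lambda>c. c j) M) {0, n}"
      by (simp add: vimage_def)
    also have "\<dots> = measure_pmf.prob (binomial_pmf n (born (ket_plus Delta j) (f_state Delta p))) {0, n}"
      using j unfolding M_def J_def by (simp add: counts_pmf_component)
    also have "\<dots> \<le> 2 * delta Delta ^ n"
      using j \<open>port_basis p < Delta div 2\<close> unfolding J_def
      by (intro binomial_pmf_prob_extremes_le born_f_state_bounds born_f_state_other_basis) auto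
    finally show ?thesis .
  qed
  have "ambiguous_counts Delta n (port_basis p) = (\<Union>j\<in>J. {c. c j = 0 \<or> c j = n})"
    unfolding ambiguous_counts_def J_def by auto
  then have "measure_pmf.prob M (ambiguous_counts Delta n (port_basis p))
      \<le> (\<Sum>j\<in>J. measure_pmf.prob M {c. c j = 0 \<or> c j = n})"
    unfolding J_def by (simp add: measure_pmf.finite_measure_subadditive_finite)
  also have "\<dots> \<le> real (card J) * (2 * delta Delta ^ n)"
    using single by (intro sum_bounded_above) auto
  also have "\<dots> = real (2 * card J) * delta Delta ^ n" by simp
  also have "\<dots> \<le> real Delta * delta Delta ^ n"
    unfolding J_def by (intro mult_right_mono) (simp_all add: card_Diff_subset_Int delta_def)
  finally show ?thesis unfolding M_def .
qed

lemma agent_choice_f_state: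
  "pmf (agent_choice Delta n (f_state Delta p)) p \<ge> 1 - real Delta * delta Delta ^ n"
proof -
  define M where "M = counts_pmf Delta n (f_state Delta p)"
  define ambiguous where "ambiguous = ambiguous_counts Delta n (port_basis p)"
  have "1 - real Delta * delta Delta ^ n \<le> 1 - measure_pmf.prob M ambiguous"
    using counts_pmf_prob_ambiguous_le unfolding M_def ambiguous_def by simp
  also have "\<dots> = measure_pmf.prob M (- ambiguous)"
    using measure_pmf.prob_compl[of ambiguous M] by (simp add: Compl_eq_Diff_UNIV)
  also have "\<dots> \<le> measure_pmf.prob M (decide Delta n -` {p})"
    using decide_counts_f_state unfolding M_def ambiguous_def
    by (intro measure_pmf.finite_measure_mono_AE) (auto simp: AE_measure_pmf_iff)
  also have "\<dots> = pmf (agent_choice Delta n (f_state Delta p)) p"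
    unfolding agent_choice_def M_def by (simp add: pmf_map)
  finally show ?thesis .
qed

end

section \<open>Number of measurements\<close>

lemma delta_bounds:
  assumes "2 \<le> Delta"
  shows "1 / 2 \<le> delta Delta" and "delta Delta < 1"
proof -
  have pos: "0 < pi / real Delta" using assms by simp
  have "pi / real Delta \<le> pi / 2" using assms by (intro divide_left_mono) auto
  then have "0 \<le> cos (pi / real Delta)" using pos by (intro cos_ge_zero) linarith+
  then show "1 / 2 \<le> delta Delta" unfolding delta_eq by simp
  have "cos (pi / real Delta) < cos 0"
    using pos \<open>pi / real Delta \<le> pi / 2\<close> by (intro cos_monotone_0_pi) linarith+
  then show "delta Delta < 1" unfolding delta_eq by simp
qed

text \<open>Chosen so that \<delta>^n \<le> (D\<Delta>)^-2, i.e. each step errs with probability at most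
  1/D^2.\<close>
definition num_measurements :: "nat \<Rightarrow> nat \<Rightarrow> nat" where
  "num_measurements D Delta = nat \<lceil>2 * ln (real D * real Delta) / ln (1 / delta Delta)\<rceil>"

lemma num_measurements_le:
  assumes "1 \<le> D" "2 \<le> Delta"
  shows "real (num_measurements D Delta)
    \<le> 3 * (ln (real D) + ln (real Delta)) / ln (1 / delta Delta)"
proof -
  define L where "L = ln (1 / delta Delta)"
  define x where "x = 2 * ln (real D * real Delta) / L"
  have "0 < L" "L \<le> ln 2"
    unfolding L_def using delta_bounds[OF assms(2)] by (auto simp: field_simps)
  moreover have "ln 2 \<le> ln (real D * real Delta)"
    using assms mult_mono[of 1 "real D" 2 "real Delta"] by simp
  ultimately have "2 * ln 2 / L \<le> x" "2 \<le> 2 * ln 2 / L"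
    unfolding x_def by (auto simp: field_simps intro: divide_right_mono)
  then have "2 \<le> x" by linarith
  have "num_measurements D Delta = nat \<lceil>x\<rceil>"
    unfolding num_measurements_def x_def L_def ..
  then have "real (num_measurements D Delta) = of_int \<lceil>x\<rceil>" using \<open>2 \<le> x\<close> by simp
  also have "\<dots> \<le> x + 1" by (rule of_int_ceiling_le_add_one)
  also have "\<dots> \<le> 3 / 2 * x" using \<open>2 \<le> x\<close> by simp
  also have "\<dots> = 3 * (ln (real D) + ln (real Delta)) / L"
    using assms \<open>0 < L\<close> unfolding x_def by (simp add: ln_mult field_simps)
  finally show ?thesis unfolding L_def .
qed

lemma delta_pow_num_measurements:
  assumes "1 \<le> D" "2 \<le> Delta"
  shows "real Delta * delta Delta ^ num_measurements D Delta \<le> 1 / (real D)\<^sup>2"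
proof -
  define d where "d = delta Delta"
  define n where "n = num_measurements D Delta"
  have d: "0 < d" "d < 1" using delta_bounds[OF assms(2)] unfolding d_def by auto
  have "2 * ln (real D * real Delta) / ln (1 / d) \<le> real n"
    unfolding n_def num_measurements_def d_def by linarith
  then have "2 * ln (real D * real Delta) \<le> real n * ln (1 / d)"
    using d by (simp add: pos_divide_le_eq)
  then have "ln (d ^ n) \<le> ln (1 / (real D * real Delta)\<^sup>2)"
    using d assms by (simp add: ln_realpow ln_div)
  then have "d ^ n \<le> 1 / (real D * real Delta)\<^sup>2"
    using d assms by (subst (asm) ln_le_cancel_iff) auto
  then have "real Delta * d ^ n \<le> real Delta * (1 / (real D * real Delta)\<^sup>2)"
    by (rule mult_left_mono) simp_all
  also have "\<dots> = 1 / (real D)\<^sup>2 / real Delta"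
    using assms by (simp add: power2_eq_square field_simps)
  also have "\<dots> \<le> 1 / (real D)\<^sup>2"
    using assms by (simp add: divide_le_eq)
  finally show ?thesis unfolding d_def n_def .
qed

lemma num_measurements_pos:
  assumes "1 \<le> D" "2 \<le> Delta"
  shows "1 \<le> num_measurements D Delta"
proof (rule ccontr)
  assume "\<not> 1 \<le> num_measurements D Delta"
  then have "num_measurements D Delta = 0" by simp
  then have "real Delta \<le> 1 / (real D)\<^sup>2"
    using delta_pow_num_measurements[OF assms] by simp
  also have "\<dots> \<le> 1" using assms by simp
  finally show False using assms by simp
qed

section \<open>Walks of the agent\<close>

lemma pmf_bind_ge_mult: "pmf W x * pmf (f x) y \<le> pmf (bind_pmf W f) y"
proof -
  have "ennreal (pmf W x * pmf (f x) y)
      = (\<integral>\<^sup>+z. ennreal (pmf (f x) y) * indicator {x} z \<partial>measure_pmf W)"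
    by (simp add: nn_integral_cmult_indicator emeasure_pmf_single ennreal_mult mult.commute)
  also have "\<dots> \<le> (\<integral>\<^sup>+z. ennreal (pmf (f z) y) \<partial>measure_pmf W)"
    by (intro nn_integral_mono) (auto split: split_indicator)
  also have "\<dots> = ennreal (pmf (bind_pmf W f) y)" by (simp add: ennreal_pmf_bind)
  finally show ?thesis by (simp add: ennreal_le_iff)
qed

lemma walk_pmf_route_ge:
  fixes x :: "nat \<Rightarrow> 'a"
  assumes "\<forall>i<k. 1 - e \<le> pmf (step (x i)) (x (Suc i))"
  shows "1 - real k * e \<le> pmf (walk_pmf step k (x 0)) (x k)"
  using assms
proof (induction k)
  case 0
  then show ?case by simp
next
  case (Suc k)
  define a where "a = pmf (walk_pmf step k (x 0)) (x k)"
  define b where "b = pmf (step (x k)) (x (Suc k))"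
  have "1 - real k * e \<le> a" "1 - e \<le> b" using Suc unfolding a_def b_def by auto
  moreover have "0 \<le> (1 - a) * (1 - b)" unfolding a_def b_def by (simp add: pmf_le_1)
  moreover have "a * b \<le> pmf (walk_pmf step (Suc k) (x 0)) (x (Suc k))"
    unfolding a_def b_def by (simp add: pmf_bind_ge_mult)
  ultimately show ?case by (simp add: algebra_simps)
qed

section \<open>Shortest paths and the oracle's pebbles\<close>

lemma is_walk_iff_successively: "is_walk E P \<longleftrightarrow> P \<noteq> [] \<and> successively E P"
  unfolding is_walk_def successively_conv_nth ..

lemma is_walk_shortcut:
  assumes "is_walk E P" "i < j" "j < length P" "P ! i = P ! j"
  shows "is_walk E (take (Suc i) P @ drop (Suc j) P)"
proof -
  have P: "successively E P" "P \<noteq> []" using assms(1) by (simp_all add: is_walk_iff_successively)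
  have "last (take (Suc i) P) = P ! j" "last (take (Suc j) P) = P ! j"
    using assms(2-4) by (simp_all add: take_Suc_conv_app_nth)
  moreover have "successively E (take (Suc i) P)"
    using P successively_append_iff[of E "take (Suc i) P" "drop (Suc i) P"] by simp
  moreover have "successively E (drop (Suc j) P)"
    and "drop (Suc j) P = [] \<or> E (last (take (Suc j) P)) (hd (drop (Suc j) P))"
    using P successively_append_iff[of E "take (Suc j) P" "drop (Suc j) P"] by auto
  ultimately show ?thesis
    unfolding is_walk_iff_successively using P(2) by (auto simp: successively_append_iff)
qed

lemma graph_dist_less_length:
  assumes "is_walk E Q" "hd Q = s" "last Q = t"
  shows "graph_dist E s t < length Q"
proof -
  have "length Q = Suc (length Q - 1)" using assms(1) by (simp add: is_walk_def)
  then have "graph_dist E s t \<le> length Q - 1"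
    unfolding graph_dist_def using assms by (intro Least_le) blast
  then show ?thesis using \<open>length Q = Suc (length Q - 1)\<close> by linarith
qed

lemma shortest_path_distinct:
  assumes "shortest_path E s t P"
  shows "distinct P"
proof (rule ccontr)
  assume "\<not> distinct P"
  then obtain i j where ij: "i < j" "j < length P" "P ! i = P ! j"
    by (metis distinct_conv_nth linorder_neqE_nat)
  define Q where "Q = take (Suc i) P @ drop (Suc j) P"
  have P: "is_walk E P" "hd P = s" "last P = t" "length P = Suc (graph_dist E s t)"
    using assms unfolding shortest_path_def by auto
  have "is_walk E Q" unfolding Q_def using is_walk_shortcut[OF P(1) ij] .
  moreover have "hd Q = s" unfolding Q_def using P(2) ij by (cases P) simp_all
  moreover have "last Q = t"
  proof (cases "length P = Suc j")
    case True
    moreover have "P \<noteq> []" using ij by auto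
    ultimately have "P ! j = t" using P(3) by (simp add: last_conv_nth)
    then show ?thesis unfolding Q_def using True ij by (simp add: take_Suc_conv_app_nth)
  next
    case False
    then show ?thesis unfolding Q_def using P(3) ij by simp
  qed
  ultimately have "graph_dist E s t < length Q" by (rule graph_dist_less_length)
  moreover have "length Q \<le> graph_dist E s t" unfolding Q_def using P(4) ij by simp
  ultimately show False by simp
qed

lemma shortest_path_first_edge:
  assumes "shortest_path E s t P" "s \<noteq> t"
  shows "1 \<le> graph_dist E s t" and "E s (P ! 1)"
proof -
  have P: "is_walk E P" "hd P = s" "last P = t" "length P = Suc (graph_dist E s t)"
    using assms unfolding shortest_path_def by auto
  show "1 \<le> graph_dist E s t"
  proof (rule ccontr)
    assume "\<not> 1 \<le> graph_dist E s t"
    then have "length P = 1" using P(4) by simp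
    then have "hd P = last P" by (cases P) auto
    then show False using P(2,3) assms(2) by simp
  qed
  then show "E s (P ! 1)" using P unfolding is_walk_def by (auto simp: hd_conv_nth)
qed

lemma walk_butlast_subset_vertices:
  assumes "simple_graph V E" "is_walk E P"
  shows "set (butlast P) \<subseteq> V"
proof
  fix v assume "v \<in> set (butlast P)"
  then obtain i where "i < length (butlast P)" "butlast P ! i = v"
    by (auto simp: in_set_conv_nth)
  then have "Suc i < length P" "v = P ! i" by (auto simp: nth_butlast)
  then have "E v (P ! Suc i)" using assms(2) unfolding is_walk_def by blast
  then show "v \<in> V" using assms(1) unfolding simple_graph_def by blast
qed

lemma deg_le_max_degree:
  assumes "simple_graph V E" "v \<in> V"
  shows "deg E v \<le> max_degree V E"
  using assms unfolding max_degree_def simple_graph_def by (intro Max_ge) auto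

lemma max_degree_ge_2:
  assumes "simple_graph V E" "E u v" "even (max_degree V E)"
  shows "2 \<le> max_degree V E"
proof -
  have "{w. E u w} \<subseteq> V" "finite V" using assms(1) unfolding simple_graph_def by auto
  then have "finite {w. E u w}" by (rule finite_subset)
  then have "0 < deg E u" unfolding deg_def using assms(2) by (auto simp: card_gt_0_iff)
  moreover have "u \<in> V" using assms(1,2) unfolding simple_graph_def by blast
  ultimately have "0 < max_degree V E" using deg_le_max_degree[OF assms(1)] by fastforce
  then show ?thesis using assms(3) by (auto elim!: evenE)
qed

lemma port_of_edge:
  assumes "port_numbering V E port" "v \<in> V" "E v u"
  shows "port_of E port v u \<in> {1..deg E v}" and "port v (port_of E port v u) = u"
proof -
  have bij: "bij_betw (port v) {1..deg E v} {u. E v u}"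
    using assms(1,2) unfolding port_numbering_def by blast
  then have "u \<in> port v ` {1..deg E v}" using assms(3) by (simp add: bij_betw_imp_surj_on)
  then obtain p where p: "p \<in> {1..deg E v}" "port v p = u" by blast
  have "port_of E port v u = p"
    unfolding port_of_def
  proof (rule the_equality)
    show "p \<in> {1..deg E v} \<and> port v p = u" using p by simp
  next
    fix q assume "q \<in> {1..deg E v} \<and> port v q = u"
    then show "q = p" using p bij by (auto simp: bij_betw_def dest: inj_onD)
  qed
  then show "port_of E port v u \<in> {1..deg E v}" "port v (port_of E port v u) = u"
    using p by simp_all
qed

lemma nth_in_set_butlast: "Suc i < length xs \<Longrightarrow> xs ! i \<in> set (butlast xs)"
  using nth_mem[of i "butlast xs"] by (simp add: nth_butlast)

lemma pebbles_support: "{v. pebbles E port Delta P v \<noteq> None} = set (butlast P)"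
  unfolding pebbles_def by auto

lemma pebbles_nth:
  assumes "distinct P" "Suc i < length P"
  shows "pebbles E port Delta P (P ! i) = Some (f_state Delta (port_of E port (P ! i) (P ! Suc i)))"
proof -
  have "(THE i'. Suc i' < length P \<and> P ! i' = P ! i) = i"
    using assms by (auto simp: nth_eq_iff_index_eq)
  moreover have "P ! i \<in> set (butlast P)" using assms(2) by (rule nth_in_set_butlast)
  ultimately show ?thesis unfolding pebbles_def by simp
qed

lemma agent_step_follows_port:
  assumes "peb v = Some (f_state Delta p)" "p \<in> {1..deg E v}" "deg E v \<le> Delta"
    and "even Delta" "1 \<le> n"
  shows "1 - real Delta * delta Delta ^ n \<le> pmf (agent_step E port Delta n peb v) (port v p)"
proof -
  let ?choice = "agent_choice Delta n (f_state Delta p)"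
  have "1 - real Delta * delta Delta ^ n \<le> pmf ?choice p"
    using assms by (intro agent_choice_f_state) auto
  also have "\<dots> \<le> measure_pmf.prob ?choice
      ((\<lambda>q. if 1 \<le> q \<and> q \<le> deg E v then port v q else v) -` {port v p})"
    using assms(2) by (auto simp: measure_pmf_single[symmetric] intro!: measure_pmf.finite_measure_mono)
  also have "\<dots> = pmf (agent_step E port Delta n peb v) (port v p)"
    unfolding agent_step_def assms(1) by (simp add: pmf_map)
  finally show ?thesis .
qed

lemma pebble_walk_reaches_treasure:
  assumes "simple_graph V E" "port_numbering V E port" "even (max_degree V E)"
    and "shortest_path E s t P" "1 \<le> n"
  defines "Delta \<equiv> max_degree V E" and "D \<equiv> graph_dist E s t"
  shows "1 - real D * (real Delta * delta Delta ^ n)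
    \<le> pmf (walk_pmf (agent_step E port Delta n (pebbles E port Delta P)) D s) t"
proof -
  have P: "is_walk E P" "hd P = s" "last P = t" "length P = Suc D"
    using assms(4) unfolding shortest_path_def D_def by auto
  have "1 - real Delta * delta Delta ^ n
      \<le> pmf (agent_step E port Delta n (pebbles E port Delta P) (P ! i)) (P ! Suc i)"
    if i: "i < D" for i
  proof -
    define v where "v = P ! i"
    define p where "p = port_of E port v (P ! Suc i)"
    have "v \<in> V"
      using walk_butlast_subset_vertices[OF assms(1) P(1)] nth_in_set_butlast[of i P] i P(4)
      unfolding v_def by auto
    moreover have "E v (P ! Suc i)" using P(1,4) i unfolding is_walk_def v_def by simp
    ultimately have "p \<in> {1..deg E v}" "port v p = P ! Suc i" "deg E v \<le> Delta"
      using port_of_edge[OF assms(2)] deg_le_max_degree[OF assms(1)]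
      unfolding p_def Delta_def by simp_all
    moreover have "pebbles E port Delta P v = Some (f_state Delta p)"
      using pebbles_nth[OF shortest_path_distinct[OF assms(4)]] i P(4) unfolding v_def p_def by simp
    ultimately show ?thesis
      using agent_step_follows_port assms(3,5) unfolding v_def Delta_def by metis
  qed
  then have "1 - real D * (real Delta * delta Delta ^ n)
      \<le> pmf (walk_pmf (agent_step E port Delta n (pebbles E port Delta P)) D (P ! 0)) (P ! D)"
    by (intro walk_pmf_route_ge) auto
  moreover have "P ! 0 = s" "P ! D = t"
    using P hd_conv_nth[of P] last_conv_nth[of P] by fastforce+
  ultimately show ?thesis by simp
qed

theorem theorem9:
  "\<exists>(C::real) (nmeas :: nat \<Rightarrow> nat \<Rightarrow> nat) (g :: nat \<Rightarrow> real).
     g \<longlonglongrightarrow> 0 \<and>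
     (\<forall>D Delta. D \<ge> 1 \<longrightarrow> Delta \<ge> 2 \<longrightarrow>
        real (nmeas D Delta) \<le> C * (ln (real D) + ln (real Delta)) / ln (1 / delta Delta)) \<and>
     (\<forall>(V :: nat set) E port s t P.
        simple_graph V E \<and> connected_graph V E \<and> port_numbering V E port \<and>
        s \<in> V \<and> t \<in> V \<and> s \<noteq> t \<and> even (max_degree V E) \<and> shortest_path E s t P \<longrightarrow>
        (let Delta = max_degree V E; D = graph_dist E s t; peb = pebbles E port Delta P in
           card {v. peb v \<noteq> None} = D \<and> {v. peb v \<noteq> None} \<subseteq> V \<and>
           pmf (walk_pmf (agent_step E port Delta (nmeas D Delta) peb) D s) t \<ge> 1 - g D))"
proof (intro exI conjI allI impI)
  show "(\<lambda>D. 1 / real D) \<longlonglongrightarrow> 0" using lim_inverse_n' by (simp add: inverse_eq_divide)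
next
  fix D Delta :: nat assume "D \<ge> 1" "Delta \<ge> 2"
  then show "real (num_measurements D Delta)
    \<le> 3 * (ln (real D) + ln (real Delta)) / ln (1 / delta Delta)"
    by (rule num_measurements_le)
next
  fix V :: "nat set" and E port s t P
  assume "simple_graph V E \<and> connected_graph V E \<and> port_numbering V E port \<and>
        s \<in> V \<and> t \<in> V \<and> s \<noteq> t \<and> even (max_degree V E) \<and> shortest_path E s t P"
  then have G: "simple_graph V E" "port_numbering V E port" "s \<noteq> t" "even (max_degree V E)"
      and P: "shortest_path E s t P"
    by auto
  define Delta D where "Delta = max_degree V E" and "D = graph_dist E s t"
  have "1 \<le> D" "2 \<le> Delta"
    using shortest_path_first_edge[OF P G(3)] max_degree_ge_2[OF G(1) _ G(4)]
    unfolding D_def Delta_def by auto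
  have "card (set (butlast P)) = D"
    using P shortest_path_distinct[OF P] unfolding shortest_path_def D_def
    by (simp add: distinct_card distinct_butlast)
  moreover have "set (butlast P) \<subseteq> V"
    using walk_butlast_subset_vertices G(1) P unfolding shortest_path_def by blast
  moreover have "real D * (real Delta * delta Delta ^ num_measurements D Delta) \<le> 1 / real D"
    using mult_left_mono[OF delta_pow_num_measurements[OF \<open>1 \<le> D\<close> \<open>2 \<le> Delta\<close>], of "real D"]
      \<open>1 \<le> D\<close>
    by (simp add: power2_eq_square)
  moreover note pebble_walk_reaches_treasure[OF G(1,2,4) P
      num_measurements_pos[OF \<open>1 \<le> D\<close> \<open>2 \<le> Delta\<close>]]
  ultimately show "let Delta = max_degree V E; D = graph_dist E s t; peb = pebbles E port Delta P in
           card {v. peb v \<noteq> None} = D \<and> {v. peb v \<noteq> None} \<subseteq> V \<and>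
           pmf (walk_pmf (agent_step E port Delta (num_measurements D Delta) peb) D s) t
             \<ge> 1 - 1 / real D"
    unfolding Let_def pebbles_support Delta_def D_def by fastforce
qed

end
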